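(* Let $a,b,c\in\mathbb{R}$ with $ac<0$ and $b\neq 0$. Let $\{P_m(z)\}_{m\geq 0}$ be the sequence of functions of $z$ generated by \[ \sum_{m=0}^\infty P_m(z)\, t^m=\frac{1}{(at^2+bt+c)(1-tz)}. \] Then for every $m\geq 0$, all the zeros of $P_m(z)$ lie in the closed disk $\{z\in\mathbb{C}: |z|\leq 1/|\alpha|\}$, where $\alpha$ is the zero of $at^2+bt+c$ of smallest modulus.
   Context: A sequence $\{P_m(z)\}$ is generated by $f(t,z)$ if, for each $z\in\mathbb{C}$, $f(t,z)$ is analytic in $t$ in a neighborhood of $t=0$ and $P_m(z)$ is the coefficient of $t^m$ in the power series expansion of $f(t,z)$ in $t$ about $0$. *)

theory Defs
  imports "HOL-Analysis.Analysis"
begin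

definition generated_by :: "(nat \<Rightarrow> complex \<Rightarrow> complex) \<Rightarrow> (complex \<Rightarrow> complex \<Rightarrow> complex) \<Rightarrow> bool" where
  "generated_by P f \<longleftrightarrow>
     (\<forall>z. (\<lambda>t. f t z) analytic_on {0} \<and>
          (\<forall>m. P m z = (deriv ^^ m) (\<lambda>t. f t z) 0 / fact m))"

end

theory Submission
  imports Defs
begin

text \<open>Since \<open>a c < 0\<close>, the roots of \<open>a t\<^sup>2 + b t + c\<close> are real and of opposite signs.
  With \<open>u = 1/\<alpha>\<close> and \<open>v\<close> the reciprocal of the other root we get \<open>u v < 0\<close>, \<open>\<bar>v\<bar> \<le> \<bar>u\<bar>\<close> and
  \<open>a t\<^sup>2 + b t + c = c (1 - u t) (1 - v t)\<close>, so multiplying three geometric series gives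
  \<open>c P\<^sub>m(z) = \<Sum>\<^sub>k\<^sub>\<le>\<^sub>m h\<^sub>k z\<^bsup>m-k\<^esup>\<close> with \<open>h\<^sub>k = \<Sum>\<^sub>i\<^sub>\<le>\<^sub>k u\<^sup>i v\<^bsup>k-i\<^esup>\<close>, and
  \<open>(z - u) (z - v) c P\<^sub>m(z) = z\<^bsup>m+2\<^esup> - h\<^sub>m\<^sub>+\<^sub>1 z + u v h\<^sub>m\<close>.
  As \<open>u\<close> and \<open>v\<close> have opposite signs, the two terms of \<open>h\<^sub>m\<^sub>+\<^sub>1 = u\<^bsup>m+1\<^esup> + v h\<^sub>m\<close> never reinforce
  each other, whence \<open>\<bar>h\<^sub>m\<^sub>+\<^sub>1\<bar> + \<bar>v\<bar> \<bar>h\<^sub>m\<bar> = \<bar>u\<bar>\<^bsup>m+1\<^esup>\<close>. At a zero \<open>z\<close> with \<open>\<bar>z\<bar> > \<bar>u\<bar>\<close> this yields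
  \<open>\<bar>z\<bar>\<^bsup>m+2\<^esup> \<le> \<bar>h\<^sub>m\<^sub>+\<^sub>1\<bar> \<bar>z\<bar> + \<bar>u\<bar> \<bar>v\<bar> \<bar>h\<^sub>m\<bar> \<le> \<bar>u\<bar>\<^bsup>m+1\<^esup> \<bar>z\<bar> < \<bar>z\<bar>\<^bsup>m+2\<^esup>\<close>.\<close>

definition complete_hom :: "'a::comm_semiring_1 \<Rightarrow> 'a \<Rightarrow> nat \<Rightarrow> 'a" where
  "complete_hom u v n = (\<Sum>k\<le>n. u^k * v^(n-k))"

lemma complete_hom_0 [simp]: "complete_hom u v 0 = 1"
  by (simp add: complete_hom_def)

lemma complete_hom_Suc: "complete_hom u v (Suc n) = u^Suc n + v * complete_hom u v n"
proof -
  have "(\<Sum>k\<le>n. u^k * v^(Suc n - k)) = v * complete_hom u v n"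
    by (simp add: complete_hom_def sum_distrib_left Suc_diff_le mult_ac)
  then show ?thesis by (simp add: complete_hom_def add.commute)
qed

lemma complete_hom_Suc_Suc:
  fixes u v :: "'a::comm_ring_1"
  shows "complete_hom u v (Suc (Suc n)) =
    (u + v) * complete_hom u v (Suc n) - u * v * complete_hom u v n"
  by (simp add: complete_hom_Suc algebra_simps)

lemma of_real_complete_hom: "of_real (complete_hom u v n) = complete_hom (of_real u) (of_real v) n"
  by (simp add: complete_hom_def)

lemma complete_hom_poly_mult:
  fixes u v z :: "'a::comm_ring_1"
  shows "(z - u) * (z - v) * (\<Sum>k\<le>m. complete_hom u v k * z^(m-k)) =
    z^(m+2) - complete_hom u v (m+1) * z + u * v * complete_hom u v m"
proof (induction m)
  case 0 then show ?case by (simp add: complete_hom_Suc algebra_simps power2_eq_square)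
next
  case (Suc m)
  let ?S = "\<lambda>m. \<Sum>k\<le>m. complete_hom u v k * z^(m-k)"
  have shift: "?S (Suc m) = z * ?S m + complete_hom u v (Suc m)"
    by (simp add: sum_distrib_left Suc_diff_le mult_ac)
  have "(z - u) * (z - v) * ?S (Suc m) =
      z * ((z - u) * (z - v) * ?S m) + (z - u) * (z - v) * complete_hom u v (Suc m)"
    unfolding shift by (simp add: algebra_simps)
  also have "\<dots> = z * (z^(m+2) - complete_hom u v (m+1) * z + u * v * complete_hom u v m)
      + (z - u) * (z - v) * complete_hom u v (Suc m)"
    using Suc.IH by simp
  also have "\<dots> = z^(Suc m + 2) - complete_hom u v (Suc m + 1) * z + u * v * complete_hom u v (Suc m)"
    by (simp add: complete_hom_Suc_Suc algebra_simps)
  finally show ?case .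
qed

lemma fps_geometric_mult: "Abs_fps (\<lambda>n. u^n) * Abs_fps (\<lambda>n. v^n) = Abs_fps (complete_hom u v)"
  by (rule fps_ext) (simp add: fps_mult_nth complete_hom_def atLeast0AtMost)

lemma has_fps_expansion_geometric:
  fixes x :: "'a::{banach, real_normed_field}"
  shows "(\<lambda>t. 1 / (1 - x * t)) has_fps_expansion Abs_fps (\<lambda>n. x^n)"
proof -
  have "(\<lambda>t. inverse (1 - x * t)) has_fps_expansion inverse (1 - fps_const x * fps_X)"
    by (intro fps_expansion_intros) auto
  then show ?thesis
    using one_minus_const_fps_X_neg_power'[of 1 x] by (simp add: inverse_eq_divide)
qed

lemma has_fps_expansion_reciprocal_product:
  fixes c u v z :: complex
  shows "(\<lambda>t. 1 / (c * (1 - u * t) * (1 - v * t) * (1 - t * z))) has_fps_expansion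
    fps_const (1 / c) * Abs_fps (\<lambda>m. \<Sum>k\<le>m. complete_hom u v k * z^(m-k))"
proof -
  have "(\<lambda>t. 1 / c * (1 / (1 - u * t) * (1 / (1 - v * t)) * (1 / (1 - z * t)))) has_fps_expansion
      fps_const (1 / c) * (Abs_fps (complete_hom u v) * Abs_fps (\<lambda>n. z^n))"
    unfolding fps_geometric_mult[symmetric] by (intro fps_expansion_intros has_fps_expansion_geometric)
  moreover have "(\<lambda>t. 1 / c * (1 / (1 - u * t) * (1 / (1 - v * t)) * (1 / (1 - z * t)))) =
      (\<lambda>t. 1 / (c * (1 - u * t) * (1 - v * t) * (1 - t * z)))"
    by (simp add: mult_ac)
  moreover have "Abs_fps (complete_hom u v) * Abs_fps (\<lambda>n. z^n) =
      Abs_fps (\<lambda>m. \<Sum>k\<le>m. complete_hom u v k * z^(m-k))"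
    by (rule fps_ext) (simp add: fps_mult_nth atLeast0AtMost)
  ultimately show ?thesis by simp
qed

lemma generated_by_nth:
  "generated_by P f \<Longrightarrow> (\<lambda>t. f t z) has_fps_expansion F \<Longrightarrow> P m z = fps_nth F m"
  by (simp add: generated_by_def fps_nth_fps_expansion)

lemma real_quadratic_root_real:
  fixes a b c :: real and x :: complex
  assumes disc: "4 * a * c < b^2" and root: "of_real a * x^2 + of_real b * x + of_real c = 0"
  shows "x \<in> \<real>"
proof (rule ccontr)
  assume "x \<notin> \<real>"
  then have "Im x \<noteq> 0" by (simp add: complex_is_Real_iff)
  have re: "a * (Re x ^ 2 - Im x ^ 2) + b * Re x + c = 0"
    and "Im x * (2 * a * Re x + b) = 0"
    using arg_cong[OF root, of Re] arg_cong[OF root, of Im]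
    by (simp_all add: power2_eq_square algebra_simps)
  then have "b = - 2 * a * Re x" using \<open>Im x \<noteq> 0\<close> by simp
  with re have "4 * a * c = b^2 + (2 * a * Im x)^2" by (simp add: algebra_simps power2_eq_square)
  with disc show False by (smt (verit) zero_le_power2)
qed

lemma quadratic_factor_by_root:
  fixes a b c r t :: "'a::field"
  assumes "a * r^2 + b * r + c = 0" and "r \<noteq> 0" and "c \<noteq> 0"
  shows "a * t^2 + b * t + c = c * (1 - t / r) * (1 - a * r / c * t)"
proof -
  have "c / r + a * r = - b"
    using assms by (simp add: field_simps power2_eq_square eq_neg_iff_add_eq_0 add_ac)
  moreover have "c * (1 - t / r) * (1 - a * r / c * t) = a * t^2 - (c / r + a * r) * t + c"
    using assms(2,3) by (simp add: field_simps power2_eq_square)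
  ultimately show ?thesis by simp
qed

lemma abs_add_mult_nonpos:
  fixes p q :: real
  assumes "p * q \<le> 0" and "\<bar>q\<bar> \<le> \<bar>p\<bar>"
  shows "\<bar>p + q\<bar> = \<bar>p\<bar> - \<bar>q\<bar>" and "0 \<le> p * (p + q)"
proof -
  have "0 \<le> p \<and> 0 \<le> p + q \<or> p \<le> 0 \<and> p + q \<le> 0"
    using assms by (auto simp: abs_if mult_le_0_iff split: if_splits)
  then show "0 \<le> p * (p + q)"
    by (auto intro: mult_nonneg_nonneg mult_nonpos_nonpos)
  show "\<bar>p + q\<bar> = \<bar>p\<bar> - \<bar>q\<bar>"
    using assms by (auto simp: abs_if mult_le_0_iff split: if_splits)
qed

context
  fixes u v :: real
  assumes opposite: "u * v \<le> 0" and dominant: "\<bar>v\<bar> \<le> \<bar>u\<bar>"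
begin

lemma complete_hom_Suc_opposite_signs:
  assumes "0 \<le> u^n * complete_hom u v n" and "\<bar>complete_hom u v n\<bar> \<le> \<bar>u\<bar>^n"
  shows "u^Suc n * (v * complete_hom u v n) \<le> 0" and "\<bar>v * complete_hom u v n\<bar> \<le> \<bar>u^Suc n\<bar>"
proof -
  have "u^Suc n * (v * complete_hom u v n) = (u * v) * (u^n * complete_hom u v n)"
    by (simp add: algebra_simps)
  also have "\<dots> \<le> 0"
    using opposite assms(1) by (rule mult_nonpos_nonneg)
  finally show "u^Suc n * (v * complete_hom u v n) \<le> 0" .
  show "\<bar>v * complete_hom u v n\<bar> \<le> \<bar>u^Suc n\<bar>"
    using dominant assms(2) by (simp add: abs_mult power_abs mult_mono)
qed

lemma complete_hom_sign_bound:
  "0 \<le> u^n * complete_hom u v n \<and> \<bar>complete_hom u v n\<bar> \<le> \<bar>u\<bar>^n"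
proof (induction n)
  case 0 then show ?case by simp
next
  case (Suc n)
  note opp = complete_hom_Suc_opposite_signs[OF Suc[THEN conjunct1] Suc[THEN conjunct2]]
  show ?case
    using abs_add_mult_nonpos[OF opp] by (simp add: complete_hom_Suc abs_mult power_abs)
qed

lemma abs_complete_hom_Suc:
  "\<bar>complete_hom u v (Suc n)\<bar> = \<bar>u\<bar>^Suc n - \<bar>v\<bar> * \<bar>complete_hom u v n\<bar>"
  using abs_add_mult_nonpos(1)[OF complete_hom_Suc_opposite_signs] complete_hom_sign_bound[of n]
  by (simp add: complete_hom_Suc abs_mult power_abs)

lemma norm_le_if_complete_hom_poly_eq_0:
  fixes z :: complex
  assumes "(\<Sum>k\<le>m. complete_hom (of_real u) (of_real v) k * z^(m-k)) = 0"
  shows "norm z \<le> \<bar>u\<bar>"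
proof (rule ccontr)
  assume "\<not> norm z \<le> \<bar>u\<bar>"
  then have z_large: "\<bar>u\<bar> < norm z" by simp
  let ?h = "complete_hom u v"
  have "z^(m+2) = of_real (?h (m+1)) * z - of_real (u * v * ?h m)"
    using complete_hom_poly_mult[of z "of_real u" "of_real v" m] assms
    by (simp add: of_real_complete_hom algebra_simps)
  then have "norm z ^ (m+2) \<le> \<bar>?h (m+1)\<bar> * norm z + \<bar>u\<bar> * (\<bar>v\<bar> * \<bar>?h m\<bar>)"
    by (metis norm_power norm_triangle_ineq4 norm_mult norm_of_real abs_mult mult.assoc)
  also have "\<dots> \<le> \<bar>?h (m+1)\<bar> * norm z + norm z * (\<bar>v\<bar> * \<bar>?h m\<bar>)"
    using z_large by (intro add_left_mono mult_right_mono) auto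
  also have "\<dots> = (\<bar>?h (m+1)\<bar> + \<bar>v\<bar> * \<bar>?h m\<bar>) * norm z"
    by (simp add: algebra_simps)
  also have "\<dots> = \<bar>u\<bar>^(m+1) * norm z"
    using abs_complete_hom_Suc[of m] by simp
  also have "\<dots> < norm z ^ (m+1) * norm z"
    using z_large by (intro mult_strict_right_mono power_strict_mono) auto
  finally show False by (simp add: algebra_simps)
qed

end

theorem theorem1:
  fixes a b c :: real and \<alpha> :: complex and P :: "nat \<Rightarrow> complex \<Rightarrow> complex"
  assumes "a * c < 0" and "b \<noteq> 0"
    and "generated_by P (\<lambda>t z. 1 / ((of_real a * t^2 + of_real b * t + of_real c) * (1 - t * z)))"
    and "of_real a * \<alpha>^2 + of_real b * \<alpha> + of_real c = 0"
    and "\<forall>t::complex. of_real a * t^2 + of_real b * t + of_real c = 0 \<longrightarrow> norm \<alpha> \<le> norm t"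
  shows "\<forall>m z. P m z = 0 \<longrightarrow> norm z \<le> 1 / norm \<alpha>"
proof (intro allI impI)
  fix m and z :: complex
  assume "P m z = 0"
  have "a \<noteq> 0" and "c \<noteq> 0" using assms(1) by auto
  have "4 * a * c < b^2"
    using assms(1) zero_le_power2[of b] unfolding mult.assoc by linarith
  then have "\<alpha> \<in> \<real>" by (rule real_quadratic_root_real[OF _ assms(4)])
  then obtain r where \<alpha>: "\<alpha> = of_real r" by (auto elim: Reals_cases)
  have "r \<noteq> 0" using assms(4) \<open>c \<noteq> 0\<close> \<alpha> by auto
  \<comment> \<open>the reciprocals of the roots \<open>r\<close> and \<open>c / (a r)\<close>\<close>
  define u v where "u = 1 / r" and "v = a * r / c"
  have factor: "of_real a * t^2 + of_real b * t + of_real c =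
      of_real c * (1 - of_real u * t) * (1 - of_real v * t)" for t :: complex
    using quadratic_factor_by_root[OF assms(4)[unfolded \<alpha>], of t] \<open>r \<noteq> 0\<close> \<open>c \<noteq> 0\<close>
    by (simp add: u_def v_def divide_inverse mult_ac)
  have "P m z = fps_nth (fps_const (1 / of_real c) *
      Abs_fps (\<lambda>m. \<Sum>k\<le>m. complete_hom (of_real u) (of_real v) k * z^(m-k))) m"
    by (rule generated_by_nth[OF assms(3)]) (simp add: factor has_fps_expansion_reciprocal_product)
  then have poly0: "(\<Sum>k\<le>m. complete_hom (of_real u) (of_real v) k * z^(m-k)) = 0"
    using \<open>P m z = 0\<close> \<open>c \<noteq> 0\<close> by simp
  have opposite: "u * v \<le> 0"
    using assms(1) \<open>r \<noteq> 0\<close> by (simp add: u_def v_def mult_less_0_iff divide_less_0_iff less_imp_le)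
  have dominant: "\<bar>v\<bar> \<le> \<bar>u\<bar>"
  proof -
    have "v \<noteq> 0" using \<open>a \<noteq> 0\<close> \<open>c \<noteq> 0\<close> \<open>r \<noteq> 0\<close> by (simp add: v_def)
    then have "of_real a * (of_real (1 / v))^2 + of_real b * of_real (1 / v) + of_real c = (0::complex)"
      unfolding factor by simp
    then have "\<bar>r\<bar> \<le> 1 / \<bar>v\<bar>" using assms(5) by (metis \<alpha> norm_of_real abs_divide abs_one)
    then show ?thesis using \<open>r \<noteq> 0\<close> \<open>v \<noteq> 0\<close> by (simp add: u_def field_simps)
  qed
  have "norm z \<le> \<bar>u\<bar>" by (rule norm_le_if_complete_hom_poly_eq_0[OF opposite dominant poly0])
  then show "norm z \<le> 1 / norm \<alpha>" by (simp add: \<alpha> u_def)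
qed

end
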